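(* Let $0<\epsilon<\frac13$, $\delta>0$, $k\in\mathbb{N}$ fixed, and $\lambda_n=\frac{1+\chi_n}{n}$ with $\epsilon\ge\chi_n\ge n^{-\frac13+\delta}$. Let $U_n$ be the set of vertices of $\Gamma_n$ not belonging to $\Gamma_{n,k}$. Then $$\mathbb{P}\Big(\big|\,|U_n|-\mathbb{E}[|U_n|]\,\big|\ge \tfrac1n\,\mathbb{E}[|U_n|]\Big)=o(1)\quad (n\to\infty).$$
   Context: $Q_2^n$ is the binary $n$-cube on $\mathbb{F}_2^n$. $\Gamma_n$ is the subgraph of $Q_2^n$ induced by including each vertex independently with probability $\lambda_n$. A $\Gamma_n$-subcomponent is a set of vertices of $\Gamma_n$ inducing a connected subgraph of $\Gamma_n$. Let $u_n=n^{-1/3}$, $m_n=n-\lfloor\frac34u_nn\rfloor$, $\pi(\chi_n)$ the survival probability of a Galton–Watson process with Binomial$(m_n,\lambda_n)$ offspring, $\nu_n=\lfloor\frac{u_nn}{2k(k+1)}\rfloor$, $\varphi_n=\pi(\chi_n)\nu_n(1-e^{-(1+\chi_n)u_n/4})$, and $c_k>0$ a fixed constant. $\Gamma_{n,k}$ is the subgraph of $Q_2^n$ induced by the set of vertices of $\Gamma_n$ that are contained in some $\Gamma_n$-subcomponent with at least $c_k\,(u_nn)\,\varphi_n^k$ vertices. *)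

theory Defs
  imports "HOL-Probability.Probability"
begin

text \<open>Vertices of the binary n-cube Q_2^n: subsets of {0..<n} (characteristic vectors
  in F_2^n). Two vertices are adjacent iff they differ in exactly one coordinate.\<close>

definition cube_vertices :: "nat \<Rightarrow> nat set set" where
  "cube_vertices n = Pow {..<n}"

definition cube_adj :: "nat set \<Rightarrow> nat set \<Rightarrow> bool" where
  "cube_adj x y \<longleftrightarrow> card ((x - y) \<union> (y - x)) = 1"

text \<open>The random induced subgraph Gamma_n: every vertex kept independently with
  probability lam (a configuration G, vertex v kept iff G v).\<close>

definition random_cube_subgraph :: "nat \<Rightarrow> real \<Rightarrow> (nat set \<Rightarrow> bool) pmf" where
  "random_cube_subgraph n lam = Pi_pmf (cube_vertices n) False (\<lambda>_. bernoulli_pmf lam)"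

definition kept :: "nat \<Rightarrow> (nat set \<Rightarrow> bool) \<Rightarrow> nat set set" where
  "kept n G = {v \<in> cube_vertices n. G v}"

definition subcomponent :: "nat \<Rightarrow> (nat set \<Rightarrow> bool) \<Rightarrow> nat set set \<Rightarrow> bool" where
  "subcomponent n G C \<longleftrightarrow> C \<subseteq> kept n G \<and> C \<noteq> {} \<and>
     (\<forall>x\<in>C. \<forall>y\<in>C. (x, y) \<in> {(a, b). a \<in> C \<and> b \<in> C \<and> cube_adj a b}\<^sup>*)"

fun sum_iid :: "nat \<Rightarrow> nat pmf \<Rightarrow> nat pmf" where
  "sum_iid 0 d = return_pmf 0"
| "sum_iid (Suc z) d = bind_pmf d (\<lambda>a. map_pmf (\<lambda>b. a + b) (sum_iid z d))"

fun gw_generation :: "nat pmf \<Rightarrow> nat \<Rightarrow> nat pmf" where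
  "gw_generation d 0 = return_pmf 1"
| "gw_generation d (Suc t) = bind_pmf (gw_generation d t) (\<lambda>z. sum_iid z d)"

text \<open>Survival probability: 1 - P(extinction) = 1 - lim_t P(Z_t = 0)
  (the events {Z_t = 0} increase to the extinction event).\<close>

definition gw_survival :: "nat pmf \<Rightarrow> real" where
  "gw_survival d = 1 - lim (\<lambda>t. pmf (gw_generation d t) 0)"

definition u_seq :: "nat \<Rightarrow> real" where
  "u_seq n = real n powr (-1/3)"

definition m_seq :: "nat \<Rightarrow> nat" where
  "m_seq n = n - nat \<lfloor>3/4 * u_seq n * real n\<rfloor>"

definition lam_seq :: "(nat \<Rightarrow> real) \<Rightarrow> nat \<Rightarrow> real" where
  "lam_seq chi n = (1 + chi n) / real n"

definition pi_seq :: "(nat \<Rightarrow> real) \<Rightarrow> nat \<Rightarrow> real" where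
  "pi_seq chi n = gw_survival (binomial_pmf (m_seq n) (lam_seq chi n))"

definition nu_seq :: "nat \<Rightarrow> nat \<Rightarrow> nat" where
  "nu_seq k n = nat \<lfloor>u_seq n * real n / (2 * real k * (real k + 1))\<rfloor>"

definition phi_seq :: "nat \<Rightarrow> (nat \<Rightarrow> real) \<Rightarrow> nat \<Rightarrow> real" where
  "phi_seq k chi n = pi_seq chi n * real (nu_seq k n) * (1 - exp (-(1 + chi n) * u_seq n / 4))"

definition gamma_nk_vertices ::
  "real \<Rightarrow> nat \<Rightarrow> (nat \<Rightarrow> real) \<Rightarrow> nat \<Rightarrow> (nat set \<Rightarrow> bool) \<Rightarrow> nat set set" where
  "gamma_nk_vertices c k chi n G = {v \<in> kept n G. \<exists>C. v \<in> C \<and> subcomponent n G C \<and>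
      real (card C) \<ge> c * (u_seq n * real n) * phi_seq k chi n ^ k}"

definition U_set ::
  "real \<Rightarrow> nat \<Rightarrow> (nat \<Rightarrow> real) \<Rightarrow> nat \<Rightarrow> (nat set \<Rightarrow> bool) \<Rightarrow> nat set set" where
  "U_set c k chi n G = kept n G - gamma_nk_vertices c k chi n G"

end

theory Submission
  imports Defs "HOL-Real_Asymp.Real_Asymp"
begin

text \<open>
  Write T_n = c_k (u_n n) phi_n^k for the size threshold, so that U_n is the
  set of kept vertices lying in no connected set of at least T_n kept vertices.

  \<^item> Variance: by the Efron--Stein inequality for product Bernoulli measures, proved here
    by induction over the ground set, Var |U_n| is at most 2^n times the square of the
    largest effect of switching one vertex.  Switching v changes U_n by at most
    1 + n T_n: v itself, plus the at most n small components adjacent to v.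
  \<^item> Mean: isolated vertices belong to U_n once T_n > 1, so E |U_n| \<ge> 2^n p (1-p)^n,
    which is at least 2^n e^-3 / n in the window 1 \<le> n p \<le> 3/2.
  \<^item> Chebyshev's inequality then bounds the probability by a polynomial in n and T_n,
    divided by 2^n.
  \<^item> Parameters: T_n > 1 because phi_n \<ge> 1, which rests on the lower bound
    pi_n \<ge> chi_n / 4 for the Galton--Watson survival probability (via generating
    functions); T_n \<le> c n^(k+1) because phi_n \<le> n.  Hence the bound is
    O(n^(2k+8) / 2^n) \<rightarrow> 0.
\<close>

section \<open>Expectations over a random subset of a finite set\<close>

text \<open>A p-random subset of a finite set A contains each element independently with
  probability p.  Its distribution gives S the weight below, and expectations become finite
  sums over Pow A; in this form they can be manipulated by induction on A.\<close>

definition subset_weight :: "real \<Rightarrow> 'a set \<Rightarrow> 'a set \<Rightarrow> real" where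
  "subset_weight p A S = (\<Prod>x\<in>A. if x \<in> S then p else 1 - p)"

definition subset_exp :: "real \<Rightarrow> 'a set \<Rightarrow> ('a set \<Rightarrow> real) \<Rightarrow> real" where
  "subset_exp p A g = (\<Sum>S\<in>Pow A. subset_weight p A S * g S)"

lemma subset_exp_empty [simp]: "subset_exp p {} g = g {}"
  by (simp add: subset_exp_def subset_weight_def)

text \<open>Conditioning on the status of one element: the basic recursion for all induction proofs.\<close>

lemma subset_exp_insert:
  assumes "finite A" "a \<notin> A"
  shows "subset_exp p (insert a A) g = subset_exp p A (\<lambda>S. p * g (insert a S) + (1 - p) * g S)"
proof -
  have disj: "Pow A \<inter> insert a ` Pow A = {}" using assms by auto
  have inj: "inj_on (insert a) (Pow A)"
    using assms by (intro inj_onI) (metis Diff_insert_absorb PowD subset_iff)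
  have w_out: "subset_weight p (insert a A) S = (1 - p) * subset_weight p A S" if "S \<subseteq> A" for S
    using assms that unfolding subset_weight_def by (subst prod.insert) auto
  have w_in: "subset_weight p (insert a A) (insert a S) = p * subset_weight p A S"
    if "S \<subseteq> A" for S
    using assms that unfolding subset_weight_def
    by (subst prod.insert) (auto intro!: prod.cong)
  have "subset_exp p (insert a A) g = (\<Sum>S\<in>Pow A. subset_weight p (insert a A) S * g S)
        + (\<Sum>S\<in>insert a ` Pow A. subset_weight p (insert a A) S * g S)"
    unfolding subset_exp_def Pow_insert using assms disj by (subst sum.union_disjoint) auto
  also have "(\<Sum>S\<in>insert a ` Pow A. subset_weight p (insert a A) S * g S)
      = (\<Sum>S\<in>Pow A. subset_weight p (insert a A) (insert a S) * g (insert a S))"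
    using inj by (subst sum.reindex) auto
  finally show ?thesis unfolding subset_exp_def
    by (auto simp: w_out w_in sum.distrib[symmetric] algebra_simps intro!: sum.cong)
qed

lemma subset_exp_cong:
  "(\<And>S. S \<subseteq> A \<Longrightarrow> g S = h S) \<Longrightarrow> subset_exp p A g = subset_exp p A h"
  unfolding subset_exp_def by (auto intro!: sum.cong)

lemma subset_weight_nonneg: "0 \<le> p \<Longrightarrow> p \<le> 1 \<Longrightarrow> 0 \<le> subset_weight p A S"
  unfolding subset_weight_def by (intro prod_nonneg) auto

lemma subset_exp_mono:
  "0 \<le> p \<Longrightarrow> p \<le> 1 \<Longrightarrow> (\<And>S. S \<subseteq> A \<Longrightarrow> g S \<le> h S) \<Longrightarrow> subset_exp p A g \<le> subset_exp p A h"
  unfolding subset_exp_def by (auto intro!: sum_mono mult_left_mono subset_weight_nonneg)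

lemma subset_exp_add: "subset_exp p A (\<lambda>S. g S + h S) = subset_exp p A g + subset_exp p A h"
  unfolding subset_exp_def by (simp add: sum.distrib algebra_simps)

lemma subset_exp_scale: "subset_exp p A (\<lambda>S. c * g S) = c * subset_exp p A g"
  unfolding subset_exp_def by (simp add: sum_distrib_left algebra_simps)

lemma subset_exp_sum: "subset_exp p A (\<lambda>S. \<Sum>v\<in>B. g v S) = (\<Sum>v\<in>B. subset_exp p A (g v))"
  unfolding subset_exp_def by (simp add: sum_distrib_left sum.swap[of _ B])

lemma subset_exp_const: "finite A \<Longrightarrow> subset_exp p A (\<lambda>_. c) = c"
  by (induction A rule: finite_induct) (simp_all add: subset_exp_insert algebra_simps)

lemma subset_exp_prod:
  assumes "finite A"
  shows "subset_exp p A (\<lambda>S. \<Prod>x\<in>A. \<phi> x (x \<in> S)) = (\<Prod>x\<in>A. p * \<phi> x True + (1 - p) * \<phi> x False)"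
  using assms
proof (induction A rule: finite_induct)
  case (insert a A)
  have "subset_exp p (insert a A) (\<lambda>S. \<Prod>x\<in>insert a A. \<phi> x (x \<in> S))
     = subset_exp p A (\<lambda>S. (p * \<phi> a True + (1 - p) * \<phi> a False) * (\<Prod>x\<in>A. \<phi> x (x \<in> S)))"
    unfolding subset_exp_insert[OF insert(1,2)]
  proof (intro subset_exp_cong)
    fix S assume S: "S \<subseteq> A"
    have "(\<Prod>x\<in>A. \<phi> x (x \<in> insert a S)) = (\<Prod>x\<in>A. \<phi> x (x \<in> S))"
    proof (intro prod.cong refl)
      fix x assume "x \<in> A"
      hence "(x \<in> insert a S) = (x \<in> S)" using insert(2) by auto
      thus "\<phi> x (x \<in> insert a S) = \<phi> x (x \<in> S)" by simp
    qed
    moreover have "a \<notin> S" using insert(2) S by auto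
    ultimately show "p * (\<Prod>x\<in>insert a A. \<phi> x (x \<in> insert a S))
        + (1 - p) * (\<Prod>x\<in>insert a A. \<phi> x (x \<in> S))
      = (p * \<phi> a True + (1 - p) * \<phi> a False) * (\<Prod>x\<in>A. \<phi> x (x \<in> S))"
      using insert(1,2) by (auto simp: algebra_simps)
  qed
  then show ?case using insert by (simp add: subset_exp_scale)
qed simp

section \<open>The Efron--Stein inequality\<close>

lemma convex_sq:
  fixes p x y :: real
  assumes "0 \<le> p" "p \<le> 1"
  shows "(p * x + (1 - p) * y)\<^sup>2 \<le> p * x\<^sup>2 + (1 - p) * y\<^sup>2"
proof -
  have "p * x\<^sup>2 + (1 - p) * y\<^sup>2 - (p * x + (1 - p) * y)\<^sup>2 = p * (1 - p) * (x - y)\<^sup>2"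
    by (simp add: power2_eq_square algebra_simps)
  moreover have "0 \<le> p * (1 - p) * (x - y)\<^sup>2" using assms by simp
  ultimately show ?thesis by linarith
qed

lemma mixture_variance:
  fixes p x y m :: real
  shows "p * (x - m)\<^sup>2 + (1 - p) * (y - m)\<^sup>2 = (p * x + (1 - p) * y - m)\<^sup>2 + p * (1 - p) * (x - y)\<^sup>2"
  by (simp add: power2_eq_square algebra_simps)

definition influence :: "real \<Rightarrow> 'a set \<Rightarrow> ('a set \<Rightarrow> real) \<Rightarrow> 'a \<Rightarrow> real" where
  "influence p A f a = subset_exp p A (\<lambda>S. (f (insert a S) - f (S - {a}))\<^sup>2)"

lemma influence_of_average:
  assumes "finite A" "a \<notin> A" "j \<in> A" "0 \<le> p" "p \<le> 1"
  shows "influence p A (\<lambda>S. p * f (insert a S) + (1 - p) * f S) j \<le> influence p (insert a A) f j"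
  unfolding influence_def subset_exp_insert[OF assms(1,2)]
proof (intro subset_exp_mono[OF assms(4,5)])
  fix S assume "S \<subseteq> A"
  have "a \<noteq> j" using assms(2,3) by auto
  hence "insert a (insert j S) = insert j (insert a S)" "insert a (S - {j}) = insert a S - {j}"
    by auto
  hence "p * f (insert a (insert j S)) + (1 - p) * f (insert j S)
        - (p * f (insert a (S - {j})) + (1 - p) * f (S - {j}))
      = p * (f (insert j (insert a S)) - f (insert a S - {j}))
        + (1 - p) * (f (insert j S) - f (S - {j}))"
    by (simp add: algebra_simps)
  thus "(p * f (insert a (insert j S)) + (1 - p) * f (insert j S)
        - (p * f (insert a (S - {j})) + (1 - p) * f (S - {j})))\<^sup>2
      \<le> p * (f (insert j (insert a S)) - f (insert a S - {j}))\<^sup>2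
        + (1 - p) * (f (insert j S) - f (S - {j}))\<^sup>2"
    using convex_sq[OF assms(4,5), of "f (insert j (insert a S)) - f (insert a S - {j})"
        "f (insert j S) - f (S - {j})"]
    by simp
qed

lemma influence_new_coordinate:
  assumes "finite A" "a \<notin> A"
  shows "influence p (insert a A) f a = subset_exp p A (\<lambda>S. (f (insert a S) - f S)\<^sup>2)"
  unfolding influence_def subset_exp_insert[OF assms]
proof (intro subset_exp_cong)
  fix S assume "S \<subseteq> A"
  hence "insert a S - {a} = S" "S - {a} = S" using assms(2) by auto
  thus "p * (f (insert a (insert a S)) - f (insert a S - {a}))\<^sup>2
      + (1 - p) * (f (insert a S) - f (S - {a}))\<^sup>2 = (f (insert a S) - f S)\<^sup>2"
    by (simp add: algebra_simps)
qed

text \<open>Efron--Stein: the variance is at most the total influence.  Induction on A: split off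
  one coordinate with the mixture decomposition and apply the hypothesis to the average.\<close>

theorem efron_stein:
  assumes "finite A" "0 \<le> p" "p \<le> 1"
  shows "subset_exp p A (\<lambda>S. (f S - subset_exp p A f)\<^sup>2) \<le> (\<Sum>a\<in>A. influence p A f a)"
  using assms(1)
proof (induction A arbitrary: f rule: finite_induct)
  case (insert a A f)
  define h where "h S = p * f (insert a S) + (1 - p) * f S" for S
  define D where "D = subset_exp p A (\<lambda>S. (f (insert a S) - f S)\<^sup>2)"
  have mean: "subset_exp p (insert a A) f = subset_exp p A h"
    unfolding h_def by (simp add: subset_exp_insert insert)
  have D: "0 \<le> D" "p * (1 - p) * D \<le> D"
  proof -
    show "0 \<le> D"
      using subset_exp_mono[OF assms(2,3), of A "\<lambda>_. 0"] by (simp add: D_def subset_exp_const insert)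
    moreover have "p * (1 - p) \<le> 1" using assms(2,3) mult_left_mono[of "1 - p" 1 p] by simp
    ultimately show "p * (1 - p) * D \<le> D" using mult_right_mono[of "p * (1 - p)" 1 D] by simp
  qed
  have "subset_exp p (insert a A) (\<lambda>S. (f S - subset_exp p (insert a A) f)\<^sup>2)
      = subset_exp p A (\<lambda>S. (h S - subset_exp p A h)\<^sup>2 + p * (1 - p) * (f (insert a S) - f S)\<^sup>2)"
    unfolding mean subset_exp_insert[OF insert(1,2)] h_def
    by (intro subset_exp_cong) (rule mixture_variance)
  also have "\<dots> = subset_exp p A (\<lambda>S. (h S - subset_exp p A h)\<^sup>2) + p * (1 - p) * D"
    by (simp add: subset_exp_add subset_exp_scale D_def)
  also have "\<dots> \<le> (\<Sum>j\<in>A. influence p A h j) + D"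
    using insert.IH D by (intro add_mono) auto
  also have "\<dots> \<le> (\<Sum>j\<in>A. influence p (insert a A) f j) + influence p (insert a A) f a"
    unfolding D_def influence_new_coordinate[OF insert(1,2)] h_def
    using influence_of_average[OF insert(1,2) _ assms(2,3)] by (intro add_mono sum_mono) auto
  also have "\<dots> = (\<Sum>j\<in>insert a A. influence p (insert a A) f j)"
    using insert(1,2) by simp
  finally show ?case .
qed simp

section \<open>Product Bernoulli measures\<close>

lemma set_pmf_Pi_bernoulli:
  assumes "finite V"
  shows "set_pmf (Pi_pmf V False (\<lambda>_. bernoulli_pmf p)) \<subseteq> (\<lambda>K x. x \<in> K) ` Pow V"
proof
  fix G assume "G \<in> set_pmf (Pi_pmf V False (\<lambda>_. bernoulli_pmf p))"
  hence "\<forall>x. x \<notin> V \<longrightarrow> G x = False" using set_Pi_pmf_subset[OF assms, of False "\<lambda>_. bernoulli_pmf p"] by blast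
  hence "G = (\<lambda>x. x \<in> {x\<in>V. G x})" by auto
  thus "G \<in> (\<lambda>K x. x \<in> K) ` Pow V" by blast
qed

lemma finite_set_pmf_Pi_bernoulli:
  assumes "finite V"
  shows "finite (set_pmf (Pi_pmf V False (\<lambda>_. bernoulli_pmf p)))"
  using finite_subset[OF set_pmf_Pi_bernoulli[OF assms]] assms by simp

lemma expectation_Pi_bernoulli:
  assumes "finite V" "0 \<le> p" "p \<le> 1"
  shows "measure_pmf.expectation (Pi_pmf V False (\<lambda>_. bernoulli_pmf p)) g
       = subset_exp p V (\<lambda>K. g (\<lambda>x. x \<in> K))"
proof -
  let ?P = "Pi_pmf V False (\<lambda>_. bernoulli_pmf p)"
  have inj: "inj_on (\<lambda>K x. x \<in> K) (Pow V)" unfolding inj_on_def by (metis Collect_mem_eq)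
  have "measure_pmf.expectation ?P g = (\<Sum>G\<in>(\<lambda>K x. x \<in> K) ` Pow V. g G * pmf ?P G)"
  proof (rule integral_measure_pmf_real)
    show "finite ((\<lambda>K x. x \<in> K) ` Pow V)" using assms(1) by simp
  qed (use set_pmf_Pi_bernoulli[OF assms(1)] in blast)
  also have "\<dots> = (\<Sum>K\<in>Pow V. g (\<lambda>x. x \<in> K) * pmf ?P (\<lambda>x. x \<in> K))"
    using sum.reindex[OF inj] by (simp add: comp_def)
  also have "\<dots> = subset_exp p V (\<lambda>K. g (\<lambda>x. x \<in> K))"
    unfolding subset_exp_def
  proof (intro sum.cong refl)
    fix K assume "K \<in> Pow V"
    hence "pmf ?P (\<lambda>x. x \<in> K) = subset_weight p V K"
      using assms unfolding subset_weight_def by (subst pmf_Pi') (auto intro!: prod.cong)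
    thus "g (\<lambda>x. x \<in> K) * pmf ?P (\<lambda>x. x \<in> K) = subset_weight p V K * g (\<lambda>x. x \<in> K)"
      by simp
  qed
  finally show ?thesis .
qed

lemma expectation_kept:
  assumes "0 \<le> p" "p \<le> 1"
  shows "measure_pmf.expectation (Pi_pmf (cube_vertices n) False (\<lambda>_. bernoulli_pmf p))
           (\<lambda>G. g (kept n G)) = subset_exp p (cube_vertices n) g"
proof -
  have "kept n (\<lambda>x. x \<in> K) = K" if "K \<subseteq> cube_vertices n" for K
    using that unfolding kept_def by auto
  thus ?thesis using assms
    by (subst expectation_Pi_bernoulli) (auto simp: cube_vertices_def intro!: subset_exp_cong)
qed

section \<open>Vertices outside large connected sets of the cube\<close>

lemma cube_adj_sym: "cube_adj a b = cube_adj b a"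
  unfolding cube_adj_def by (simp add: Un_commute)

lemma cube_adj_irrefl: "\<not> cube_adj v v"
  unfolding cube_adj_def by simp

text \<open>Every vertex of Q_2^n has at most n neighbours: flipping one of n coordinates.\<close>

lemma card_cube_neighbours:
  assumes "v \<subseteq> {..<n}"
  shows "card {u \<in> cube_vertices n. cube_adj u v} \<le> n"
proof -
  have "{u \<in> cube_vertices n. cube_adj u v} \<subseteq> (\<lambda>i. (v - {i}) \<union> ({i} - v)) ` {..<n}"
  proof
    fix u assume "u \<in> {u \<in> cube_vertices n. cube_adj u v}"
    hence u: "u \<subseteq> {..<n}" "card ((u - v) \<union> (v - u)) = 1"
      unfolding cube_vertices_def cube_adj_def by auto
    then obtain i where i: "(u - v) \<union> (v - u) = {i}" by (meson card_1_singletonE)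
    hence "i < n" using u(1) assms by blast
    moreover have "u = (v - {i}) \<union> ({i} - v)" using i by blast
    ultimately show "u \<in> (\<lambda>i. (v - {i}) \<union> ({i} - v)) ` {..<n}" by blast
  qed
  hence "card {u \<in> cube_vertices n. cube_adj u v} \<le> card ((\<lambda>i. (v - {i}) \<union> ({i} - v)) ` {..<n})"
    by (intro card_mono) auto
  also have "\<dots> \<le> n" using card_image_le[of "{..<n}"] by simp
  finally show ?thesis .
qed

definition induced_edges :: "nat set set \<Rightarrow> (nat set \<times> nat set) set" where
  "induced_edges C = {(a, b). a \<in> C \<and> b \<in> C \<and> cube_adj a b}"

definition connected_set :: "nat set set \<Rightarrow> bool" where
  "connected_set C \<longleftrightarrow> (\<forall>x\<in>C. \<forall>y\<in>C. (x, y) \<in> (induced_edges C)\<^sup>*)"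

definition in_large_set :: "real \<Rightarrow> nat set set \<Rightarrow> nat set \<Rightarrow> bool" where
  "in_large_set T K w \<longleftrightarrow> (\<exists>C. w \<in> C \<and> C \<subseteq> K \<and> connected_set C \<and> T \<le> real (card C))"

definition small_part :: "real \<Rightarrow> nat set set \<Rightarrow> nat set set" where
  "small_part T K = {w \<in> K. \<not> in_large_set T K w}"

definition size_threshold :: "real \<Rightarrow> nat \<Rightarrow> (nat \<Rightarrow> real) \<Rightarrow> nat \<Rightarrow> real" where
  "size_threshold c k chi n = c * (u_seq n * real n) * phi_seq k chi n ^ k"

lemma U_set_eq_small_part:
  "U_set c k chi n G = small_part (size_threshold c k chi n) (kept n G)"
  unfolding U_set_def small_part_def gamma_nk_vertices_def in_large_set_def subcomponent_def
    connected_set_def induced_edges_def size_threshold_def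
  by auto

lemma in_large_set_mono: "K \<subseteq> K' \<Longrightarrow> in_large_set T K w \<Longrightarrow> in_large_set T K' w"
  unfolding in_large_set_def by blast

definition component :: "nat set set \<Rightarrow> nat set \<Rightarrow> nat set set" where
  "component K u = {x. (u, x) \<in> (induced_edges K)\<^sup>*}"

lemma induced_edges_sym: "(x, y) \<in> (induced_edges K)\<^sup>* \<Longrightarrow> (y, x) \<in> (induced_edges K)\<^sup>*"
proof -
  have "sym (induced_edges K)" unfolding sym_def induced_edges_def using cube_adj_sym by auto
  moreover assume "(x, y) \<in> (induced_edges K)\<^sup>*"
  ultimately show ?thesis by (meson sym_rtrancl symE)
qed

lemma component_subset: "u \<in> K \<Longrightarrow> component K u \<subseteq> K"
proof
  fix x assume "u \<in> K" "x \<in> component K u"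
  hence "(u, x) \<in> (induced_edges K)\<^sup>*" unfolding component_def by simp
  thus "x \<in> K" using \<open>u \<in> K\<close>
    by (induction rule: rtrancl_induct) (auto simp: induced_edges_def)
qed

lemma component_self: "u \<in> component K u"
  unfolding component_def by simp

lemma component_eq: "x \<in> component K u \<Longrightarrow> component K x = component K u"
  unfolding component_def using induced_edges_sym by (auto intro: rtrancl_trans)

lemma path_in_component:
  "(u, x) \<in> (induced_edges K)\<^sup>* \<Longrightarrow> (u, x) \<in> (induced_edges (component K u))\<^sup>*"
proof (induction rule: rtrancl_induct)
  case (step y z)
  hence "y \<in> component K u" "z \<in> component K u"
    unfolding component_def by (auto intro: rtrancl_into_rtrancl)
  hence "(y, z) \<in> induced_edges (component K u)" using step(2) unfolding induced_edges_def by auto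
  thus ?case using step(3) by (rule rtrancl_into_rtrancl[rotated])
qed simp

lemma component_connected: "connected_set (component K u)"
  unfolding connected_set_def
proof (intro ballI)
  fix x y assume "x \<in> component K u" "y \<in> component K u"
  hence "(u, x) \<in> (induced_edges (component K u))\<^sup>*" "(u, y) \<in> (induced_edges (component K u))\<^sup>*"
    using path_in_component unfolding component_def by blast+
  thus "(x, y) \<in> (induced_edges (component K u))\<^sup>*"
    using induced_edges_sym by (blast intro: rtrancl_trans)
qed

lemma small_component:
  assumes "w \<in> K" "\<not> in_large_set T K w"
  shows "real (card (component K w)) < T"
  using assms component_subset[of w K] component_connected[of K w] component_self[of w K]
  unfolding in_large_set_def by force

lemma path_to_vertex:
  assumes "(w, v) \<in> (induced_edges C)\<^sup>*"
  shows "w = v \<or> (\<exists>u. u \<in> C \<and> cube_adj u v \<and> (w, u) \<in> (induced_edges (C - {v}))\<^sup>*)"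
  using assms
proof (induction rule: converse_rtrancl_induct)
  case base
  show ?case by simp
next
  case (step x y)
  have xy: "x \<in> C" "y \<in> C" "cube_adj x y" using step(1) unfolding induced_edges_def by auto
  show ?case
  proof (cases "x = v \<or> y = v")
    case True
    thus ?thesis using xy by auto
  next
    case False
    then obtain u where u: "u \<in> C" "cube_adj u v" "(y, u) \<in> (induced_edges (C - {v}))\<^sup>*"
      using step(3) by auto
    have "(x, y) \<in> induced_edges (C - {v})" using xy False unfolding induced_edges_def by auto
    thus ?thesis using u by (meson converse_rtrancl_into_rtrancl)
  qed
qed

text \<open>Adding a vertex v to K changes the small part only by v itself and by the small
  components of K adjacent to v, which may merge into a large connected set through v.\<close>

lemma small_part_gain: "small_part T (insert v K) - small_part T K \<subseteq> {v}"
  unfolding small_part_def using in_large_set_mono[of K "insert v K" T] by auto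

lemma small_part_loss:
  assumes "v \<notin> K"
  shows "small_part T K - small_part T (insert v K)
      \<subseteq> (\<Union>u\<in>{u\<in>K. cube_adj u v \<and> real (card (component K u)) < T}. component K u)"
proof
  fix w assume "w \<in> small_part T K - small_part T (insert v K)"
  hence w: "w \<in> K" "\<not> in_large_set T K w" "in_large_set T (insert v K) w"
    unfolding small_part_def by auto
  then obtain C where C: "w \<in> C" "C \<subseteq> insert v K" "connected_set C" "T \<le> real (card C)"
    unfolding in_large_set_def by blast
  have "v \<in> C"
  proof (rule ccontr)
    assume "v \<notin> C"
    hence "C \<subseteq> K" using C by auto
    thus False using C w unfolding in_large_set_def by blast
  qed
  hence "(w, v) \<in> (induced_edges C)\<^sup>*" using C unfolding connected_set_def by blast
  moreover have "w \<noteq> v" using w assms by auto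
  ultimately obtain u where u: "u \<in> C" "cube_adj u v" "(w, u) \<in> (induced_edges (C - {v}))\<^sup>*"
    using path_to_vertex by metis
  have "(induced_edges (C - {v}))\<^sup>* \<subseteq> (induced_edges K)\<^sup>*"
    using C(2) unfolding induced_edges_def by (intro rtrancl_mono) auto
  hence "u \<in> component K w" using u(3) unfolding component_def by auto
  hence same: "component K u = component K w" by (rule component_eq)
  have "u \<in> K" using \<open>u \<in> component K w\<close> component_subset[OF w(1)] by blast
  moreover have "real (card (component K u)) < T" using same small_component[OF w(1,2)] by simp
  moreover have "w \<in> component K u" using same component_self by simp
  ultimately show "w \<in> (\<Union>u\<in>{u\<in>K. cube_adj u v \<and> real (card (component K u)) < T}. component K u)"
    using u(2) by blast
qed

lemma abs_card_diff_le:
  assumes "finite A" "finite B"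
  shows "\<bar>real (card A) - real (card B)\<bar> \<le> real (card (A - B)) + real (card (B - A))"
proof -
  have "card (A - B) = card A - card (A \<inter> B)" "card (B - A) = card B - card (A \<inter> B)"
    using assms by (simp_all add: card_Diff_subset_Int Int_commute)
  moreover have "card (A \<inter> B) \<le> card A" "card (A \<inter> B) \<le> card B"
    using assms by (auto intro: card_mono)
  ultimately show ?thesis by simp
qed

text \<open>Bounded differences: switching one vertex changes the size of the small part by at
  most 1 + n T (v itself, plus at most n components of fewer than T vertices).\<close>

lemma small_part_switch:
  assumes "S \<subseteq> cube_vertices n" "v \<in> cube_vertices n" "0 \<le> T"
  shows "\<bar>real (card (small_part T (insert v S))) - real (card (small_part T (S - {v})))\<bar>
      \<le> 1 + real n * T"
proof -
  define K where "K = S - {v}"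
  define N where "N = {u\<in>K. cube_adj u v \<and> real (card (component K u)) < T}"
  have ins: "insert v S = insert v K" unfolding K_def by auto
  have KV: "K \<subseteq> cube_vertices n" using assms(1) unfolding K_def by auto
  have fin: "finite K" using KV finite_subset by (auto simp: cube_vertices_def)
  have vK: "v \<notin> K" unfolding K_def by auto
  have finU: "finite (small_part T K)" "finite (small_part T (insert v K))"
    using fin unfolding small_part_def by auto
  have gain: "real (card (small_part T (insert v K) - small_part T K)) \<le> 1"
    using card_mono[OF _ small_part_gain[of T v K]] by simp
  have "card (small_part T K - small_part T (insert v K)) \<le> card (\<Union>u\<in>N. component K u)"
  proof (rule card_mono)
    have "(\<Union>u\<in>N. component K u) \<subseteq> K" using component_subset unfolding N_def by blast
    thus "finite (\<Union>u\<in>N. component K u)" using fin by (rule finite_subset)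
    show "small_part T K - small_part T (insert v K) \<subseteq> (\<Union>u\<in>N. component K u)"
      using small_part_loss[OF vK] unfolding N_def .
  qed
  also have "\<dots> \<le> (\<Sum>u\<in>N. card (component K u))" by (rule card_UN_le) (simp add: N_def fin)
  finally have "real (card (small_part T K - small_part T (insert v K)))
      \<le> real (\<Sum>u\<in>N. card (component K u))" by (simp only: of_nat_le_iff)
  also have "\<dots> = (\<Sum>u\<in>N. real (card (component K u)))" by simp
  also have "\<dots> \<le> (\<Sum>u\<in>N. T)" by (intro sum_mono) (auto simp: N_def)
  also have "\<dots> = real (card N) * T" by simp
  also have "\<dots> \<le> real n * T"
  proof (intro mult_right_mono assms(3))
    have "N \<subseteq> {u \<in> cube_vertices n. cube_adj u v}" using KV unfolding N_def by auto
    hence "card N \<le> card {u \<in> cube_vertices n. cube_adj u v}"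
      by (intro card_mono) (auto simp: cube_vertices_def)
    also have "\<dots> \<le> n" using assms(2) card_cube_neighbours unfolding cube_vertices_def by auto
    finally show "real (card N) \<le> real n" by simp
  qed
  finally show ?thesis
    using gain abs_card_diff_le[OF finU(2,1)] unfolding ins K_def[symmetric] by linarith
qed

lemma isolated_in_small_part:
  assumes "v \<in> K" "\<forall>u\<in>K. \<not> cube_adj v u" "1 < T"
  shows "v \<in> small_part T K"
proof -
  have "\<not> in_large_set T K v"
  proof
    assume "in_large_set T K v"
    then obtain C where C: "v \<in> C" "C \<subseteq> K" "connected_set C" "T \<le> real (card C)"
      unfolding in_large_set_def by blast
    have "C \<subseteq> {v}"
    proof
      fix y assume "y \<in> C"
      hence "(v, y) \<in> (induced_edges C)\<^sup>*" using C unfolding connected_set_def by blast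
      thus "y \<in> {v}"
        by (cases rule: converse_rtranclE) (use C assms(2) in \<open>auto simp: induced_edges_def\<close>)
    qed
    hence "card C \<le> 1" using card_mono[of "{v}" C] by simp
    thus False using C(4) assms(3) by simp
  qed
  thus ?thesis using assms(1) unfolding small_part_def by auto
qed

section \<open>Concentration of the small part for fixed n\<close>

text \<open>The indicator that v is an isolated kept vertex, written as a product of one factor
  per vertex x, so that its expectation factorizes.\<close>

definition isolation_factor :: "nat set \<Rightarrow> nat set \<Rightarrow> bool \<Rightarrow> real" where
  "isolation_factor v x b =
     (if x = v then (if b then 1 else 0) else if cube_adj v x then (if b then 0 else 1) else 1)"

lemma isolation_product:
  assumes "finite V" "K \<subseteq> V" "v \<in> V"
  shows "(\<Prod>x\<in>V. isolation_factor v x (x \<in> K))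
       = (if v \<in> K \<and> (\<forall>u\<in>K. \<not> cube_adj v u) then 1 else 0)"
proof (cases "v \<in> K \<and> (\<forall>u\<in>K. \<not> cube_adj v u)")
  case True
  hence "(\<Prod>x\<in>V. isolation_factor v x (x \<in> K)) = (\<Prod>x\<in>V. 1)"
    by (intro prod.cong) (auto simp: isolation_factor_def)
  thus ?thesis using True by simp
next
  case False
  then consider "v \<notin> K" | u where "u \<in> K" "cube_adj v u" by blast
  hence "\<exists>x\<in>V. isolation_factor v x (x \<in> K) = 0"
  proof cases
    case 1 thus ?thesis using assms(3) by (intro bexI[of _ v]) (auto simp: isolation_factor_def)
  next
    case 2
    hence "u \<noteq> v" using cube_adj_irrefl by blast
    thus ?thesis using 2 assms(2) by (intro bexI[of _ u]) (auto simp: isolation_factor_def)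
  qed
  hence "(\<Prod>x\<in>V. isolation_factor v x (x \<in> K)) = 0" using assms(1) by simp
  thus ?thesis using False by simp
qed

lemma prob_isolated_lower:
  assumes "finite V" "v \<in> V" "0 \<le> p" "p \<le> 1" "card {x\<in>V. cube_adj x v} \<le> n"
  shows "p * (1 - p) ^ n \<le> subset_exp p V (\<lambda>K. \<Prod>x\<in>V. isolation_factor v x (x \<in> K))"
proof -
  let ?N = "(V - {v}) \<inter> {x. cube_adj v x}"
  have "subset_exp p V (\<lambda>K. \<Prod>x\<in>V. isolation_factor v x (x \<in> K))
      = (\<Prod>x\<in>V. if x = v then p else if cube_adj v x then 1 - p else 1)"
    unfolding subset_exp_prod[OF assms(1)] by (intro prod.cong) (auto simp: isolation_factor_def)
  also have "\<dots> = p * (\<Prod>x\<in>V - {v}. if cube_adj v x then 1 - p else 1)"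
    using assms(1,2) by (subst prod.remove[of _ v]) (auto intro!: prod.cong)
  also have "\<dots> = p * (1 - p) ^ card ?N"
    using assms(1) by (simp add: prod.If_cases)
  finally have eq: "subset_exp p V (\<lambda>K. \<Prod>x\<in>V. isolation_factor v x (x \<in> K))
      = p * (1 - p) ^ card ?N" .
  have "card ?N \<le> card {x\<in>V. cube_adj x v}"
    using assms(1) cube_adj_sym by (intro card_mono) auto
  hence "(1 - p) ^ n \<le> (1 - p) ^ card ?N"
    using assms(3-5) by (intro power_decreasing) auto
  thus ?thesis unfolding eq using assms(3) by (simp add: mult_left_mono)
qed

text \<open>First moment: isolated vertices alone make the small part exponentially large.\<close>

lemma expected_small_part_lower:
  assumes "0 \<le> p" "p \<le> 1" "1 < T"
  shows "2 ^ n * (p * (1 - p) ^ n)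
      \<le> subset_exp p (cube_vertices n) (\<lambda>K. real (card (small_part T K)))"
proof -
  define V where "V = cube_vertices n"
  have fV: "finite V" by (simp add: V_def cube_vertices_def)
  have "2 ^ n * (p * (1 - p) ^ n) = (\<Sum>v\<in>V. p * (1 - p) ^ n)"
    by (simp add: V_def cube_vertices_def card_Pow)
  also have "\<dots> \<le> (\<Sum>v\<in>V. subset_exp p V (\<lambda>K. \<Prod>x\<in>V. isolation_factor v x (x \<in> K)))"
  proof (intro sum_mono prob_isolated_lower[OF fV _ assms(1,2)])
    fix v assume "v \<in> V"
    thus "card {x \<in> V. cube_adj x v} \<le> n"
      using card_cube_neighbours[of v n] by (simp add: V_def cube_vertices_def)
  qed
  also have "\<dots> = subset_exp p V (\<lambda>K. \<Sum>v\<in>V. \<Prod>x\<in>V. isolation_factor v x (x \<in> K))"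
    by (rule subset_exp_sum[symmetric])
  also have "\<dots> \<le> subset_exp p V (\<lambda>K. real (card (small_part T K)))"
  proof (intro subset_exp_mono[OF assms(1,2)])
    fix K assume K: "K \<subseteq> V"
    have "(\<Sum>v\<in>V. \<Prod>x\<in>V. isolation_factor v x (x \<in> K))
        = real (card (V \<inter> {v. v \<in> K \<and> (\<forall>u\<in>K. \<not> cube_adj v u)}))"
      using isolation_product[OF fV K] fV by (simp add: sum.If_cases)
    also have "\<dots> \<le> real (card (small_part T K))"
    proof (intro of_nat_mono card_mono)
      show "finite (small_part T K)" using finite_subset[OF K fV] unfolding small_part_def by auto
    qed (use isolated_in_small_part[OF _ _ assms(3)] in blast)
    finally show "(\<Sum>v\<in>V. \<Prod>x\<in>V. isolation_factor v x (x \<in> K)) \<le> real (card (small_part T K))" .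
  qed
  finally show ?thesis unfolding V_def .
qed

text \<open>Second moment, by Efron--Stein and the bounded differences of the small part.\<close>

lemma small_part_variance:
  fixes T p :: real and n :: nat
  defines "F \<equiv> \<lambda>K. real (card (small_part T K))"
  assumes "0 \<le> p" "p \<le> 1" "0 \<le> T"
  shows "subset_exp p (cube_vertices n) (\<lambda>K. (F K - subset_exp p (cube_vertices n) F)\<^sup>2)
      \<le> 2 ^ n * (1 + real n * T)\<^sup>2"
proof -
  define V where "V = cube_vertices n"
  have fV: "finite V" by (simp add: V_def cube_vertices_def)
  have "subset_exp p V (\<lambda>K. (F K - subset_exp p V F)\<^sup>2) \<le> (\<Sum>v\<in>V. influence p V F v)"
    by (rule efron_stein[OF fV assms(2,3)])
  also have "\<dots> \<le> (\<Sum>v\<in>V. (1 + real n * T)\<^sup>2)"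
  proof (intro sum_mono)
    fix v assume v: "v \<in> V"
    have "influence p V F v \<le> subset_exp p V (\<lambda>_. (1 + real n * T)\<^sup>2)"
      unfolding influence_def
    proof (intro subset_exp_mono[OF assms(2,3)])
      fix S assume "S \<subseteq> V"
      hence "\<bar>F (insert v S) - F (S - {v})\<bar> \<le> 1 + real n * T"
        unfolding F_def using small_part_switch[of S n v T] v assms(4) unfolding V_def by simp
      thus "(F (insert v S) - F (S - {v}))\<^sup>2 \<le> (1 + real n * T)\<^sup>2"
        using abs_le_square_iff by fastforce
    qed
    thus "influence p V F v \<le> (1 + real n * T)\<^sup>2" using subset_exp_const[OF fV] by simp
  qed
  also have "\<dots> = 2 ^ n * (1 + real n * T)\<^sup>2" by (simp add: V_def cube_vertices_def card_Pow)
  finally show ?thesis unfolding V_def .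
qed

lemma one_minus_pow_lower:
  assumes "0 \<le> p" "p \<le> 1/2" "real n * p \<le> 3/2"
  shows "exp (-3) \<le> (1 - p) ^ n"
proof -
  have "-p - 2 * p\<^sup>2 \<le> ln (1 - p)" using ln_one_minus_pos_lower_bound assms by simp
  moreover have "2 * p\<^sup>2 \<le> p" using assms mult_left_mono[of "2 * p" 1 p] by (simp add: power2_eq_square)
  ultimately have "-2 * p \<le> ln (1 - p)" by linarith
  hence "real n * (-2 * p) \<le> real n * ln (1 - p)" by (intro mult_left_mono) auto
  hence "exp (-3) \<le> exp (real n * ln (1 - p))" using assms(3) by simp
  also have "\<dots> = (1 - p) ^ n" using assms by (subst exp_of_nat_mult) simp
  finally show ?thesis .
qed

lemma expected_small_part_window:
  assumes p: "0 < p" "p \<le> 1/2" "1 \<le> real n * p" "real n * p \<le> 3/2" and T: "1 < T"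
  shows "2 ^ n * exp (-3) / real n
      \<le> subset_exp p (cube_vertices n) (\<lambda>K. real (card (small_part T K)))"
proof -
  have n: "real n > 0" using p by (cases "n = 0") auto
  have pn: "1 / real n * exp (-3) \<le> p * (1 - p) ^ n"
    using one_minus_pow_lower[of p n] p n by (intro mult_mono) (auto simp: field_simps)
  have "2 ^ n * exp (-3) / real n = 2 ^ n * (1 / real n * exp (-3))" by simp
  also have "\<dots> \<le> 2 ^ n * (p * (1 - p) ^ n)" using pn by (rule mult_left_mono) simp
  also have "\<dots> \<le> subset_exp p (cube_vertices n) (\<lambda>K. real (card (small_part T K)))"
    using p T by (intro expected_small_part_lower) auto
  finally show ?thesis .
qed

text \<open>Chebyshev's inequality: for 1 \<le> n p \<le> 3/2 the mean of the small part is at least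
  2^n e^-3 / n, while its variance is only 2^n times a power of n and T.\<close>

theorem small_part_concentration:
  fixes n :: nat and p T :: real
  defines "P \<equiv> Pi_pmf (cube_vertices n) False (\<lambda>_. bernoulli_pmf p)"
    and "X \<equiv> \<lambda>G. real (card (small_part T (kept n G)))"
  assumes p: "0 < p" "p \<le> 1/2" "1 \<le> real n * p" "real n * p \<le> 3/2" and T: "1 < T"
  shows "measure_pmf.prob P
           {G. measure_pmf.expectation P X / real n \<le> \<bar>X G - measure_pmf.expectation P X\<bar>}
      \<le> (1 + real n * T)\<^sup>2 * real n ^ 4 * exp 6 / 2 ^ n"
proof -
  define F where "F = (\<lambda>K. real (card (small_part T K)))"
  define E where "E = measure_pmf.expectation P X"
  define D where "D = 2 ^ n * (1 + real n * T)\<^sup>2"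
  define y where "y = 2 ^ n * exp (-3) / (real n)\<^sup>2"
  have p01: "0 \<le> p" "p \<le> 1" using p by auto
  have n: "real n > 0" using p by (cases "n = 0") auto
  have E: "E = subset_exp p (cube_vertices n) F"
    using expectation_kept[OF p01, of n F] unfolding E_def P_def X_def F_def .
  have "y = 2 ^ n * exp (-3) / real n / real n" unfolding y_def by (simp add: power2_eq_square)
  also have "\<dots> \<le> E / real n"
    using expected_small_part_window[OF p T] unfolding E F_def by (rule divide_right_mono) simp
  finally have y: "0 < y" "y \<le> E / real n" unfolding y_def using n by simp_all
  have "measure_pmf.expectation P (\<lambda>G. (X G - E)\<^sup>2) = subset_exp p (cube_vertices n) (\<lambda>K. (F K - E)\<^sup>2)"
    using expectation_kept[OF p01, of n "\<lambda>K. (F K - E)\<^sup>2"] unfolding P_def X_def F_def .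
  also have "\<dots> \<le> D"
    using small_part_variance[OF p01, of T n] T unfolding E D_def F_def by simp
  finally have var: "measure_pmf.expectation P (\<lambda>G. (X G - E)\<^sup>2) \<le> D" .
  have "finite (set_pmf P)" unfolding P_def by (rule finite_set_pmf_Pi_bernoulli) (simp add: cube_vertices_def)
  hence "measure_pmf.prob P {G. E / real n \<le> \<bar>X G - E\<bar>}
      \<le> measure_pmf.expectation P (\<lambda>G. (X G - E)\<^sup>2) / (E / real n)\<^sup>2"
    using measure_pmf.Chebyshev_inequality[of X P "E / real n"] y
    by (simp add: E_def integrable_measure_pmf_finite)
  also have "\<dots> \<le> D / (E / real n)\<^sup>2"
    using var by (simp add: divide_right_mono)
  also have "\<dots> \<le> D / y\<^sup>2"
    using y n unfolding D_def by (intro divide_left_mono power_mono mult_pos_pos) auto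
  also have "D / y\<^sup>2 = (1 + real n * T)\<^sup>2 * real n ^ 4 * exp 6 / 2 ^ n"
  proof -
    have "exp (-3) ^ 2 * exp 6 = (1::real)"
      by (simp add: exp_of_nat_mult[symmetric] exp_add[symmetric])
    thus ?thesis using n unfolding y_def D_def
      by (simp add: field_simps power2_eq_square) (simp add: algebra_simps eval_nat_numeral)
  qed
  finally show ?thesis unfolding E_def .
qed

section \<open>Survival of the Galton--Watson process\<close>

text \<open>Probability generating functions (with values in ennreal, so no integrability
  side conditions arise).\<close>

definition pgf :: "nat pmf \<Rightarrow> real \<Rightarrow> ennreal" where
  "pgf M s = (\<integral>\<^sup>+x. ennreal (s ^ x) \<partial>measure_pmf M)"

lemma pgf_sum_iid:
  assumes "0 \<le> s"
  shows "pgf (sum_iid z d) s = pgf d s ^ z"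
proof (induction z)
  case (Suc z)
  have "pgf (sum_iid (Suc z) d) s
      = (\<integral>\<^sup>+a. \<integral>\<^sup>+b. ennreal (s ^ a) * ennreal (s ^ b) \<partial>sum_iid z d \<partial>d)"
    unfolding pgf_def using assms by (simp add: power_add ennreal_mult)
  also have "\<dots> = pgf d s * pgf (sum_iid z d) s"
    unfolding pgf_def by (simp add: nn_integral_cmult nn_integral_multc)
  finally show ?case using Suc by (simp add: mult.commute)
qed (simp add: pgf_def)

text \<open>If s is above the pgf of the offspring law at s, it stays above the pgf of every
  generation; in particular P(Z_t = 0) \<le> s for all t.\<close>

lemma pgf_generation_le:
  assumes "0 \<le> s" "pgf d s \<le> ennreal s"
  shows "pgf (gw_generation d t) s \<le> ennreal s"
proof (induction t)
  case (Suc t)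
  have "pgf (gw_generation d (Suc t)) s = (\<integral>\<^sup>+z. pgf d s ^ z \<partial>gw_generation d t)"
    using pgf_sum_iid[OF assms(1)] by (simp add: pgf_def)
  also have "\<dots> \<le> (\<integral>\<^sup>+z. ennreal (s ^ z) \<partial>gw_generation d t)"
    using power_mono[OF assms(2)] assms(1) by (intro nn_integral_mono) (simp add: ennreal_power)
  also have "\<dots> \<le> ennreal s" using Suc unfolding pgf_def .
  finally show ?case .
qed (simp add: pgf_def)

lemma pmf_zero_le_pgf:
  assumes "0 \<le> s"
  shows "ennreal (pmf M 0) \<le> pgf M s"
proof -
  have "ennreal (pmf M 0) = (\<integral>\<^sup>+z. indicator {0} z \<partial>measure_pmf M)"
    by (simp add: emeasure_pmf_single)
  also have "\<dots> \<le> pgf M s" unfolding pgf_def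
    by (intro nn_integral_mono) (auto simp: indicator_def)
  finally show ?thesis .
qed

lemma extinction_incseq: "incseq (\<lambda>t. pmf (gw_generation d t) 0)"
proof (rule incseq_SucI)
  fix t
  have "ennreal (pmf (gw_generation d t) 0)
      = (\<integral>\<^sup>+z. indicator {0} z \<partial>measure_pmf (gw_generation d t))"
    by (simp add: emeasure_pmf_single)
  also have "\<dots> \<le> (\<integral>\<^sup>+z. ennreal (pmf (sum_iid z d) 0) \<partial>measure_pmf (gw_generation d t))"
    by (intro nn_integral_mono) (simp add: indicator_def)
  also have "\<dots> = ennreal (pmf (gw_generation d (Suc t)) 0)"
    by (simp add: ennreal_pmf_bind)
  finally show "pmf (gw_generation d t) 0 \<le> pmf (gw_generation d (Suc t)) 0"
    by simp
qed

lemma extinction_limit: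
  obtains L where "(\<lambda>t. pmf (gw_generation d t) 0) \<longlonglongrightarrow> L" "L \<le> 1"
    "lim (\<lambda>t. pmf (gw_generation d t) 0) = L"
proof -
  obtain L where L: "(\<lambda>t. pmf (gw_generation d t) 0) \<longlonglongrightarrow> L"
    using incseq_convergent[OF extinction_incseq[of d], where B = 1] by (auto simp: pmf_le_1)
  moreover have "L \<le> 1" using L by (rule LIMSEQ_le_const2) (auto simp: pmf_le_1)
  ultimately show ?thesis using that limI by blast
qed

lemma gw_survival_le_1: "gw_survival d \<le> 1"
proof -
  obtain L where L: "(\<lambda>t. pmf (gw_generation d t) 0) \<longlonglongrightarrow> L"
    "lim (\<lambda>t. pmf (gw_generation d t) 0) = L" by (rule extinction_limit)
  have "0 \<le> L" using L(1) by (rule LIMSEQ_le_const) auto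
  thus ?thesis unfolding gw_survival_def L(2) by simp
qed

lemma gw_survival_nonneg: "0 \<le> gw_survival d"
  using extinction_limit[of d] unfolding gw_survival_def by force

lemma gw_survival_lower:
  assumes "0 \<le> s" "pgf d s \<le> ennreal s"
  shows "1 - s \<le> gw_survival d"
proof -
  obtain L where L: "(\<lambda>t. pmf (gw_generation d t) 0) \<longlonglongrightarrow> L"
    "lim (\<lambda>t. pmf (gw_generation d t) 0) = L" by (rule extinction_limit)
  have "pmf (gw_generation d t) 0 \<le> s" for t
    using order.trans[OF pmf_zero_le_pgf[OF assms(1)] pgf_generation_le[OF assms]] assms(1)
    by simp
  hence "L \<le> s" using L(1) by (intro LIMSEQ_le_const2) auto
  thus ?thesis unfolding gw_survival_def L(2) by simp
qed

lemma pgf_binomial: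
  assumes "0 \<le> p" "p \<le> 1" "0 \<le> s"
  shows "pgf (binomial_pmf m p) s = ennreal ((p * s + (1 - p)) ^ m)"
proof -
  have "pgf (binomial_pmf m p) s = (\<Sum>x\<le>m. ennreal (s ^ x) * ennreal (pmf (binomial_pmf m p) x))"
    unfolding pgf_def
    by (rule nn_integral_measure_pmf_support) (use assms in \<open>auto simp: set_pmf_binomial_eq split: if_splits\<close>)
  also have "\<dots> = ennreal (\<Sum>x\<le>m. real (m choose x) * (p * s) ^ x * (1 - p) ^ (m - x))"
    using assms by (simp add: ennreal_mult[symmetric] sum_nonneg power_mult_distrib mult_ac)
  also have "(\<Sum>x\<le>m. real (m choose x) * (p * s) ^ x * (1 - p) ^ (m - x)) = (p * s + (1 - p)) ^ m"
    by (rule binomial_ring[symmetric])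
  finally show ?thesis .
qed

lemma binomial_survival_lower:
  assumes p: "0 \<le> p" "p \<le> 1" and e: "0 \<le> e" "e \<le> 1" and mean: "1 \<le> real m * p * (1 - e)"
  shows "e \<le> gw_survival (binomial_pmf m p)"
proof -
  have pe: "0 \<le> real m * p * e" using p e by simp
  have "(p * (1 - e) + (1 - p)) ^ m = (1 - p * e) ^ m" by (simp add: algebra_simps)
  also have "\<dots> \<le> exp (- (p * e)) ^ m"
    using exp_ge_add_one_self[of "- (p * e)"] p e by (intro power_mono) (auto simp: mult_le_one)
  also have "\<dots> = 1 / exp (real m * p * e)"
    by (simp add: exp_of_nat_mult[symmetric] exp_minus field_simps)
  also have "\<dots> \<le> 1 / (1 + real m * p * e)"
    using pe exp_ge_add_one_self[of "real m * p * e"] by (intro divide_left_mono) auto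
  also have "\<dots> \<le> 1 - e"
  proof -
    have "(1 - e) * (1 + real m * p * e) - 1 = e * (real m * p * (1 - e) - 1)"
      by (simp add: algebra_simps)
    moreover have "0 \<le> e * (real m * p * (1 - e) - 1)" using mean e by simp
    ultimately have "1 \<le> (1 - e) * (1 + real m * p * e)" by linarith
    thus ?thesis using pe by (simp add: field_simps)
  qed
  finally have "pgf (binomial_pmf m p) (1 - e) \<le> ennreal (1 - e)"
    using pgf_binomial[OF p, of "1 - e"] e by (simp add: ennreal_leI)
  thus ?thesis using gw_survival_lower[of "1 - e"] e by simp
qed

lemma u_seq_times_n: "0 < n \<Longrightarrow> u_seq n * real n = real n powr (2/3)"
  using powr_add[of "real n" "-1/3" 1] unfolding u_seq_def by simp

lemma u_seq_pos: "0 < n \<Longrightarrow> 0 < u_seq n"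
  unfolding u_seq_def by simp

lemma u_seq_le_1: "0 < n \<Longrightarrow> u_seq n \<le> 1"
  using powr_mono[of "-1/3" 0 "real n"] unfolding u_seq_def by simp

lemma u_seq_sq: "0 < n \<Longrightarrow> u_seq n * u_seq n * real n powr (2/3) = 1"
  unfolding u_seq_def by (simp add: powr_add[symmetric])

lemma m_seq_lower: "0 < n \<Longrightarrow> real n * (1 - 3/4 * u_seq n) \<le> real (m_seq n)"
proof -
  assume n: "0 < n"
  have "u_seq n * real n \<le> 1 * real n" using u_seq_le_1[OF n] by (intro mult_right_mono) auto
  hence x: "0 \<le> 3/4 * u_seq n * real n" "3/4 * u_seq n * real n \<le> real n"
    using u_seq_pos[OF n] by auto
  hence "real (nat \<lfloor>3/4 * u_seq n * real n\<rfloor>) \<le> 3/4 * u_seq n * real n"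
    "nat \<lfloor>3/4 * u_seq n * real n\<rfloor> \<le> n" by linarith+
  thus ?thesis unfolding m_seq_def by (simp add: algebra_simps)
qed

lemma survival_margin: "0 \<le> x \<Longrightarrow> x \<le> 1/3 \<Longrightarrow> 1 \<le> (1 + x) * (1 - 3/8 * x) * (1 - x / 4)"
  for x :: real
proof -
  assume x: "0 \<le> x" "x \<le> 1/3"
  have "(1 + x) * (1 - 3/8 * x) * (1 - x / 4) = 1 + x * (3/8 - 17/32 * x + 3/32 * x\<^sup>2)"
    by (simp add: power2_eq_square field_simps)
  moreover have "0 \<le> 3/8 - 17/32 * x + 3/32 * x\<^sup>2" using x by (simp add: power2_eq_square)
  ultimately show ?thesis using x by simp
qed

text \<open>The survival probability pi_n is at least chi_n / 4 once chi_n \<ge> 2 u_n: the truncation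
  from n to m_n children costs less than the supercriticality chi_n.\<close>

lemma pi_seq_lower:
  assumes n: "0 < n" and chi: "2 * u_seq n \<le> chi n" "chi n \<le> 1/3"
  shows "chi n / 4 \<le> pi_seq chi n"
proof -
  define x where "x = chi n"
  define p where "p = lam_seq chi n"
  have x: "0 \<le> x" "x \<le> 1/3" using chi u_seq_pos[OF n] unfolding x_def by auto
  have np: "real n * p = 1 + x" unfolding p_def lam_seq_def x_def using n by simp
  have p: "0 \<le> p" "p \<le> 1"
  proof -
    show "0 \<le> p" unfolding p_def lam_seq_def using x x_def by simp
    have "n \<noteq> 1" using chi x unfolding x_def u_seq_def by auto
    hence "1 + x \<le> real n" using x n by linarith
    thus "p \<le> 1" unfolding p_def lam_seq_def x_def[symmetric] using n by simp
  qed
  have "(1 + x) * (1 - 3/8 * x) \<le> (1 + x) * (1 - 3/4 * u_seq n)"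
    using chi x unfolding x_def by (intro mult_left_mono) auto
  also have "\<dots> = (real n * p) * (1 - 3/4 * u_seq n)" by (simp only: np)
  also have "\<dots> = real n * (1 - 3/4 * u_seq n) * p" by (simp add: algebra_simps)
  also have "\<dots> \<le> real (m_seq n) * p" using m_seq_lower[OF n] p by (intro mult_right_mono)
  finally have "(1 + x) * (1 - 3/8 * x) * (1 - x / 4) \<le> real (m_seq n) * p * (1 - x / 4)"
    using x by (intro mult_right_mono) auto
  hence "1 \<le> real (m_seq n) * p * (1 - x / 4)" using survival_margin[OF x] by linarith
  hence "x / 4 \<le> gw_survival (binomial_pmf (m_seq n) p)"
    using x by (intro binomial_survival_lower p) auto
  thus ?thesis unfolding pi_seq_def p_def x_def .
qed

text \<open>Lower bound for the last factor 1 - exp(-(1 + chi_n) u_n / 4) of phi_n.\<close>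

lemma one_minus_exp_lower: "0 \<le> x \<Longrightarrow> x \<le> 1 \<Longrightarrow> x / 2 \<le> 1 - exp (- x)"
  for x :: real
proof -
  assume x: "0 \<le> x" "x \<le> 1"
  have "exp (- x) \<le> 1 / (1 + x)"
    using exp_ge_add_one_self[of x] x by (simp add: exp_minus field_simps)
  moreover have "x / 2 \<le> 1 - 1 / (1 + x)"
    using x mult_left_le_one_le[of x x] by (simp add: field_simps)
  ultimately show ?thesis by linarith
qed

text \<open>For large n the parameter phi_n is at least 1: it is of order
  chi_n \<cdot> n^(2/3) \<cdot> n^(-1/3), i.e.\ of order n^delta.\<close>

lemma phi_seq_ge_1:
  assumes n: "0 < n" and k: "1 \<le> k"
    and chi: "real n powr (-1/3 + delta) \<le> chi n" "chi n \<le> 1/3"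
    and large: "128 * real k * (real k + 1) \<le> real n powr delta"
      "8 * real k * (real k + 1) \<le> real n powr (2/3)"
  shows "1 \<le> phi_seq k chi n"
proof -
  define a where "a = u_seq n"
  define q where "q = real n powr (2/3) / (2 * real k * (real k + 1))"
  have a: "0 < a" "a \<le> 1" using u_seq_pos[OF n] u_seq_le_1[OF n] unfolding a_def by auto
  have kk: "4 \<le> 2 * real k * (real k + 1)" using k mult_mono[of 2 "2 * real k" 2 "real k + 1"] by simp
  have chi_a: "a * real n powr delta \<le> chi n"
    using chi(1) powr_add[of "real n" "-1/3" delta] unfolding a_def u_seq_def by simp
  have "0 \<le> a * real n powr delta" using a by simp
  hence chi0: "0 \<le> chi n" using chi_a by linarith
  have "a * 2 \<le> a * real n powr delta" using large(1) kk a by (intro mult_left_mono) auto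
  hence pi: "chi n / 4 \<le> pi_seq chi n" using pi_seq_lower[of n chi] n chi(2) chi_a unfolding a_def by simp
  have "4 \<le> q" unfolding q_def using large(2) kk by (simp add: field_simps)
  hence nu: "q / 2 \<le> real (nu_seq k n)"
    unfolding nu_seq_def u_seq_times_n[OF n] q_def[symmetric] by linarith
  have "(1 + chi n) * a \<le> 4/3 * 1" using chi chi_a a by (intro mult_mono) auto
  hence "(1 + chi n) * a / 4 / 2 \<le> 1 - exp (- ((1 + chi n) * a / 4))"
    using chi0 a by (intro one_minus_exp_lower) auto
  moreover have "a / 8 \<le> (1 + chi n) * a / 4 / 2" using chi0 a by simp
  moreover have arg: "- (1 + chi n) * u_seq n / 4 = - ((1 + chi n) * a / 4)"
    unfolding a_def by (simp add: algebra_simps)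
  ultimately have E: "a / 8 \<le> 1 - exp (- (1 + chi n) * u_seq n / 4)" unfolding arg by linarith
  have "1 \<le> real n powr delta / (2 * real k * (real k + 1)) / 64"
    using large(1) kk by (simp add: field_simps)
  also have "\<dots> = a * real n powr delta * q * a / 64"
    using u_seq_sq[OF n] unfolding a_def q_def by (simp add: field_simps)
  also have "\<dots> \<le> chi n / 4 * (q / 2) * (a / 8)" using chi_a \<open>4 \<le> q\<close> a by (simp add: field_simps)
  also have "\<dots> \<le> phi_seq k chi n"
    unfolding phi_seq_def using pi nu E chi0 a \<open>4 \<le> q\<close> by (intro mult_mono) auto
  finally show ?thesis .
qed

lemma phi_seq_le_n:
  assumes n: "0 < n" and k: "1 \<le> k" and chi: "0 \<le> chi n"
  shows "phi_seq k chi n \<le> real n"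
proof -
  have kk: "1 \<le> 2 * real k * (real k + 1)" using k mult_mono[of 1 "2 * real k" 1 "real k + 1"] by simp
  have "real n powr (2/3) \<le> real n" using powr_mono[of "2/3" 1 "real n"] n by simp
  also have "real n \<le> real n * (2 * real k * (real k + 1))"
    using kk mult_left_mono[OF kk, of "real n"] by simp
  finally have "real n powr (2/3) / (2 * real k * (real k + 1)) \<le> real n"
    using kk by (simp add: divide_le_eq)
  hence nu: "real (nu_seq k n) \<le> real n"
    unfolding nu_seq_def u_seq_times_n[OF n] by linarith
  have "0 \<le> (1 + chi n) * u_seq n / 4" using chi u_seq_pos[OF n] by simp
  hence E: "0 \<le> 1 - exp (- (1 + chi n) * u_seq n / 4)" "1 - exp (- (1 + chi n) * u_seq n / 4) \<le> 1"
    by (simp_all only: mult_minus_left divide_minus_left) auto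
  have "phi_seq k chi n \<le> 1 * real n * 1"
    unfolding phi_seq_def using gw_survival_le_1 gw_survival_nonneg nu E
    by (intro mult_mono) (auto simp: pi_seq_def)
  thus ?thesis by simp
qed

lemma lam_seq_window:
  assumes n: "3 \<le> n" and chi: "0 \<le> chi n" "chi n \<le> 1/3"
  shows "0 < lam_seq chi n" "lam_seq chi n \<le> 1/2"
    "1 \<le> real n * lam_seq chi n" "real n * lam_seq chi n \<le> 3/2"
proof -
  have np: "real n * lam_seq chi n = 1 + chi n" unfolding lam_seq_def using n by simp
  show "0 < lam_seq chi n" unfolding lam_seq_def using chi n by simp
  show "1 \<le> real n * lam_seq chi n" "real n * lam_seq chi n \<le> 3/2" using np chi by auto
  have "3 * lam_seq chi n \<le> real n * lam_seq chi n"
    using n \<open>0 < lam_seq chi n\<close> by (intro mult_right_mono) auto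
  thus "lam_seq chi n \<le> 1/2" using np chi by linarith
qed

lemma size_threshold_window:
  assumes n: "0 < n" and k: "1 \<le> k" and c: "0 < c"
    and chi: "real n powr (-1/3 + delta) \<le> chi n" "chi n \<le> 1/3"
    and large: "128 * real k * (real k + 1) \<le> real n powr delta"
      "8 * real k * (real k + 1) \<le> real n powr (2/3)" "1 < c * real n powr (2/3)"
  shows "1 < size_threshold c k chi n" "size_threshold c k chi n \<le> c * real n ^ (k + 1)"
proof -
  have phi: "1 \<le> phi_seq k chi n" by (rule phi_seq_ge_1[of n k delta chi, OF n k chi large(1,2)])
  have "0 \<le> chi n" using chi(1) powr_ge_zero[of "real n"] by (rule order.trans[rotated])
  hence "phi_seq k chi n ^ k \<le> real n ^ k" using phi phi_seq_le_n[OF n k] by (intro power_mono) auto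
  moreover have "real n powr (2/3) \<le> real n" using powr_mono[of "2/3" 1 "real n"] n by simp
  ultimately have "c * real n powr (2/3) * phi_seq k chi n ^ k \<le> c * real n * real n ^ k"
    using c phi by (intro mult_mono) auto
  thus "size_threshold c k chi n \<le> c * real n ^ (k + 1)"
    unfolding size_threshold_def u_seq_times_n[OF n] by simp
  have "c * real n powr (2/3) * 1 \<le> c * real n powr (2/3) * phi_seq k chi n ^ k"
    using c one_le_power[OF phi] by (intro mult_left_mono) auto
  thus "1 < size_threshold c k chi n"
    unfolding size_threshold_def u_seq_times_n[OF n] using large(3) by simp
qed

lemma eventually_window:
  assumes "eps < 1/3" "0 < delta" "1 \<le> k" "0 < c"
    and chi: "\<forall>\<^sub>F n in sequentially. real n powr (-1/3 + delta) \<le> chi n \<and> chi n \<le> eps"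
  shows "\<forall>\<^sub>F n in sequentially. 3 \<le> n \<and> 0 \<le> chi n \<and> chi n \<le> 1/3
           \<and> 1 < size_threshold c k chi n \<and> size_threshold c k chi n \<le> c * real n ^ (k + 1)"
proof -
  have "filterlim (\<lambda>n. real n powr delta) at_top sequentially" using assms(2) by real_asymp
  hence big_delta: "\<forall>\<^sub>F n in sequentially. 128 * real k * (real k + 1) \<le> real n powr delta"
    by (simp add: filterlim_at_top)
  have "filterlim (\<lambda>n. real n powr (2/3)) at_top sequentially" by real_asymp
  hence "\<forall>Z. \<forall>\<^sub>F n in sequentially. Z \<le> real n powr (2/3)" by (simp add: filterlim_at_top)
  hence big_23: "\<forall>\<^sub>F n in sequentially. max (8 * real k * (real k + 1)) (2 / c) \<le> real n powr (2/3)"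
    by blast
  show ?thesis
    using chi big_delta big_23 eventually_ge_at_top[of 3]
  proof eventually_elim
    case (elim n)
    have chi': "real n powr (-1/3 + delta) \<le> chi n" "chi n \<le> 1/3" using elim assms(1) by auto
    have "c * (2 / c) \<le> c * real n powr (2/3)" using elim assms(4) by (intro mult_left_mono) auto
    hence "1 < c * real n powr (2/3)" using assms(4) by simp
    hence "1 < size_threshold c k chi n \<and> size_threshold c k chi n \<le> c * real n ^ (k + 1)"
      using size_threshold_window[of n k c delta chi, OF _ assms(3,4) chi'] elim by auto
    moreover have "0 \<le> chi n" using chi'(1) powr_ge_zero[of "real n"] by (rule order.trans[rotated])
    ultimately show ?case using elim chi' by simp
  qed
qed

lemma concentration_bound_poly:
  fixes N T c :: real and k n :: nat
  assumes "1 \<le> N" "0 \<le> T" "T \<le> c * N ^ (k + 1)" "0 < c"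
  shows "(1 + N * T)\<^sup>2 * N ^ 4 * exp 6 / 2 ^ n \<le> (1 + c)\<^sup>2 * exp 6 * (N ^ (2 * k + 8) / 2 ^ n)"
proof -
  have "N * T \<le> N * (c * N ^ (k + 1))" using assms by (intro mult_left_mono) auto
  hence "1 + N * T \<le> (1 + c) * N ^ (k + 2)"
    using one_le_power[OF assms(1), of "k + 2"] by (simp add: algebra_simps)
  hence "(1 + N * T)\<^sup>2 \<le> ((1 + c) * N ^ (k + 2))\<^sup>2" using assms by (intro power_mono) auto
  also have "\<dots> = (1 + c)\<^sup>2 * N ^ ((k + 2) * 2)"
    by (simp only: power_mult_distrib power_mult)
  also have "(k + 2) * 2 = 2 * k + 4" by simp
  finally have "(1 + N * T)\<^sup>2 * (N ^ 4 * exp 6 / 2 ^ n)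
      \<le> (1 + c)\<^sup>2 * N ^ (2 * k + 4) * (N ^ 4 * exp 6 / 2 ^ n)"
    using assms(1) by (intro mult_right_mono) auto
  also have "\<dots> = (1 + c)\<^sup>2 * exp 6 * (N ^ (2 * k + 4) * N ^ 4 / 2 ^ n)"
    by (simp add: algebra_simps)
  also have "N ^ (2 * k + 4) * N ^ 4 = N ^ (2 * k + 8)" by (simp flip: power_add add: add.commute)
  finally show ?thesis by simp
qed

theorem lemma3p2:
  fixes eps delta c :: real and k :: nat and chi :: "nat \<Rightarrow> real"
  assumes "0 < eps" and "eps < 1/3" and "delta > 0" and "k \<ge> 1" and "c > 0"
    and "\<forall>\<^sub>F n in sequentially. real n powr (-1/3 + delta) \<le> chi n \<and> chi n \<le> eps"
  shows "(\<lambda>n. let P = random_cube_subgraph n (lam_seq chi n);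
                   EU = measure_pmf.expectation P (\<lambda>G. real (card (U_set c k chi n G)))
               in measure_pmf.prob P
                    {G. \<bar>real (card (U_set c k chi n G)) - EU\<bar> \<ge> EU / real n})
          \<longlonglongrightarrow> 0"
    (is "?prob \<longlonglongrightarrow> 0")
proof -
  define B where "B n = (1 + c)\<^sup>2 * exp 6 * (real n ^ (2 * k + 8) / 2 ^ n)" for n :: nat
  have "B \<longlonglongrightarrow> 0" unfolding B_def by real_asymp
  moreover have "\<forall>\<^sub>F n in sequentially. ?prob n \<le> B n"
    using eventually_window[OF assms(2-6)]
  proof eventually_elim
    case (elim n)
    let ?T = "size_threshold c k chi n"
    have "?prob n \<le> (1 + real n * ?T)\<^sup>2 * real n ^ 4 * exp 6 / 2 ^ n"
      using small_part_concentration[of "lam_seq chi n" n ?T] lam_seq_window[of n chi] elim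
      by (simp add: Let_def random_cube_subgraph_def U_set_eq_small_part)
    also have "\<dots> \<le> B n"
      unfolding B_def using concentration_bound_poly[of "real n" ?T c k n] elim assms(5) by simp
    finally show ?case .
  qed
  moreover have "\<forall>\<^sub>F n in sequentially. 0 \<le> ?prob n" by (simp add: Let_def)
  ultimately show ?thesis using tendsto_sandwich[of "\<lambda>_. 0" ?prob _ B] by auto
qed

end
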